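(* Let $\Sigma\in\mathbb{M}(M,\mathbb{C})\otimes\mathbb{M}(N,\mathbb{C})$ be positive semidefinite and separable, and let $\{P_j\}_{j=1}^u$ be a resolution of identity in $\mathcal{C}_\Sigma$ consisting of minimal projections in $\mathcal{C}_\Sigma$. Then there exist $s\in\mathbb{N}$ and positive semidefinite matrices $R_1,\dots,R_s\in\mathbb{M}(M,\mathbb{C})$, $T_1,\dots,T_s\in\mathbb{M}(N,\mathbb{C})$ such that $\Sigma=\sum_{i=1}^s R_i\otimes T_i$ and $T_iP_j=P_jT_i$ for all $i\in\{1,\dots,s\}$ and $j\in\{1,\dots,u\}$.
   Context: We identify $\mathbb{M}(M,\mathbb{C})\otimes\mathbb{M}(N,\mathbb{C})$ with $\mathbb{M}(MN,\mathbb{C})$ via the Kronecker product, $(A\otimes B)_{(i,j),(l,m)}=A_{il}B_{jm}$. A positive semidefinite $\Sigma\in\mathbb{M}(M,\mathbb{C})\otimes\mathbb{M}(N,\mathbb{C})$ is called separable if it can be written as $\Sigma=\sum_{i=1}^n \tilde R_i\otimes\tilde T_i$ with all $\tilde R_i\in\mathbb{M}(M,\mathbb{C})$ and $\tilde T_i\in\mathbb{M}(N,\mathbb{C})$ positive semidefinite. The right commutant is $\mathcal{C}_\Sigma:=\{A\in\mathbb{M}(N,\mathbb{C}) : (\mathbf{1}_M\otimes A)\Sigma=\Sigma(\mathbf{1}_M\otimes A)\}$, a unital $*$-subalgebra of $\mathbb{M}(N,\mathbb{C})$. A projection means an orthogonal projection. A nonzero projection $P\in\mathcal{A}$ is minimal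 in a $*$-algebra $\mathcal{A}$ if every projection $Q\in\mathcal{A}$ with $Q\le P$ satisfies $Q=0$ or $Q=P$. A resolution of identity in $\mathcal{A}$ is a finite family of mutually orthogonal projections $P_i\in\mathcal{A}$ with $\sum_i P_i=\mathbf{1}_N$. *)

theory Defs
  imports "Jordan_Normal_Form.Matrix" "HOL-Library.Complex_Order"
begin

definition hermitian_mat :: "complex mat \<Rightarrow> bool" where
  "hermitian_mat A \<longleftrightarrow> dim_row A = dim_col A \<and>
     (\<forall>i < dim_row A. \<forall>j < dim_col A. A $$ (i, j) = cnj (A $$ (j, i)))"

text \<open>Positive semidefinite of size n: Hermitian n x n and v^* A v \<ge> 0 for every v in C^n
  (order on complex from Complex_Order: real and nonnegative).\<close>
definition psd_mat :: "nat \<Rightarrow> complex mat \<Rightarrow> bool" where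
  "psd_mat n A \<longleftrightarrow> A \<in> carrier_mat n n \<and> hermitian_mat A \<and>
     (\<forall>v :: nat \<Rightarrow> complex. 0 \<le> (\<Sum>i<n. \<Sum>j<n. cnj (v i) * A $$ (i, j) * v j))"

text \<open>Kronecker product, (A \<otimes> B)_{(i,j),(l,m)} = A_{il} B_{jm}, with the pair (i,j)
  identified with the index i * N + j (N = size of B).\<close>
definition kron_mat :: "complex mat \<Rightarrow> complex mat \<Rightarrow> complex mat" where
  "kron_mat A B = mat (dim_row A * dim_row B) (dim_col A * dim_col B)
     (\<lambda>(r, c). A $$ (r div dim_row B, c div dim_col B) * B $$ (r mod dim_row B, c mod dim_col B))"

definition msum :: "nat \<Rightarrow> (nat \<Rightarrow> complex mat) \<Rightarrow> nat set \<Rightarrow> complex mat" where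
  "msum n f I = mat n n (\<lambda>(r, c). \<Sum>i\<in>I. f i $$ (r, c))"

definition separable :: "nat \<Rightarrow> nat \<Rightarrow> complex mat \<Rightarrow> bool" where
  "separable M N \<Sigma> \<longleftrightarrow> (\<exists>n :: nat. \<exists>R T :: nat \<Rightarrow> complex mat.
     (\<forall>i<n. psd_mat M (R i) \<and> psd_mat N (T i)) \<and>
     \<Sigma> = msum (M * N) (\<lambda>i. kron_mat (R i) (T i)) {..<n})"

definition right_commutant :: "nat \<Rightarrow> nat \<Rightarrow> complex mat \<Rightarrow> complex mat set" where
  "right_commutant M N \<Sigma> = {A \<in> carrier_mat N N.
     kron_mat (1\<^sub>m M) A * \<Sigma> = \<Sigma> * kron_mat (1\<^sub>m M) A}"

definition proj_mat :: "nat \<Rightarrow> complex mat \<Rightarrow> bool" where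
  "proj_mat N P \<longleftrightarrow> P \<in> carrier_mat N N \<and> P * P = P \<and> hermitian_mat P"

text \<open>For projections, Q \<le> P means Q P = Q (equivalently P - Q is psd).\<close>
definition proj_le :: "complex mat \<Rightarrow> complex mat \<Rightarrow> bool" where
  "proj_le Q P \<longleftrightarrow> Q * P = Q"

definition minimal_proj_in :: "nat \<Rightarrow> complex mat set \<Rightarrow> complex mat \<Rightarrow> bool" where
  "minimal_proj_in N \<A> P \<longleftrightarrow> P \<in> \<A> \<and> proj_mat N P \<and> P \<noteq> 0\<^sub>m N N \<and>
     (\<forall>Q \<in> \<A>. proj_mat N Q \<and> proj_le Q P \<longrightarrow> Q = 0\<^sub>m N N \<or> Q = P)"

end

theory Submission
  imports Defs
begin

(* Since each P_j lies in the right commutant, the matrices 1 \<otimes> P_j are idempotents commuting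
   with \<Sigma> and summing to the identity; hence \<Sigma> equals its pinching
   \<Sum>_j (1 \<otimes> P_j) \<Sigma> (1 \<otimes> P_j). Applied to a separable decomposition \<Sigma> = \<Sum>_i R_i \<otimes> T_i,
   the pinching replaces each T_i by \<Sum>_j P_j T_i P_j, which is again positive semidefinite and
   commutes with every P_k, because by orthogonality of the P_j both products with P_k reduce to
   P_k T_i P_k. *)

lemma mod_less_of_less_mult: "r < m * (n::nat) \<Longrightarrow> r mod n < n"
  by (cases "n = 0") auto

lemma sum_lessThan_mult_div_mod:
  fixes g :: "nat \<Rightarrow> nat \<Rightarrow> 'a::comm_monoid_add"
  shows "(\<Sum>x<k * l. g (x div l) (x mod l)) = (\<Sum>a<k. \<Sum>b<l. g a b)"
proof -
  have "a * l + b < k * l" if "a < k" "b < l" for a b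
  proof -
    have "a * l + b < Suc a * l" using \<open>b < l\<close> by simp
    also have "\<dots> \<le> k * l" using \<open>a < k\<close> by (intro mult_le_mono1) simp
    finally show ?thesis .
  qed
  then have "(\<Sum>x<k * l. g (x div l) (x mod l)) = (\<Sum>(a, b)\<in>{..<k} \<times> {..<l}. g a b)"
    by (intro sum.reindex_bij_witness[of _ "\<lambda>(a, b). a * l + b" "\<lambda>x. (x div l, x mod l)"])
      (auto simp: less_mult_imp_div_less mod_less_of_less_mult)
  also have "\<dots> = (\<Sum>a<k. \<Sum>b<l. g a b)"
    by (simp add: sum.cartesian_product)
  finally show ?thesis .
qed

lemma sum_lessThan_swap_pairs:
  fixes F :: "nat \<Rightarrow> nat \<Rightarrow> nat \<Rightarrow> nat \<Rightarrow> 'a::comm_monoid_add"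
  shows "(\<Sum>i<n. \<Sum>j<n. \<Sum>k<n. \<Sum>l<n. F i j k l) = (\<Sum>k<n. \<Sum>l<n. \<Sum>i<n. \<Sum>j<n. F i j k l)"
proof -
  have "(\<Sum>j<n. \<Sum>k<n. \<Sum>l<n. F i j k l) = (\<Sum>k<n. \<Sum>l<n. \<Sum>j<n. F i j k l)" for i
    by (subst sum.swap) (rule sum.cong[OF refl], rule sum.swap)
  then have "(\<Sum>i<n. \<Sum>j<n. \<Sum>k<n. \<Sum>l<n. F i j k l) = (\<Sum>i<n. \<Sum>k<n. \<Sum>l<n. \<Sum>j<n. F i j k l)"
    by simp
  also have "\<dots> = (\<Sum>k<n. \<Sum>i<n. \<Sum>l<n. \<Sum>j<n. F i j k l)"
    by (rule sum.swap)
  also have "\<dots> = (\<Sum>k<n. \<Sum>l<n. \<Sum>i<n. \<Sum>j<n. F i j k l)"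
    by (rule sum.cong[OF refl], rule sum.swap)
  finally show ?thesis .
qed

lemma index_mult_mat_sum:
  "A \<in> carrier_mat m k \<Longrightarrow> B \<in> carrier_mat k p \<Longrightarrow> i < m \<Longrightarrow> j < p \<Longrightarrow>
   (A * B) $$ (i, j) = (\<Sum>x<k. A $$ (i, x) * B $$ (x, j))"
  by (auto simp: scalar_prod_def atLeast0LessThan intro!: sum.cong)

lemma kron_mat_carrier:
  "A \<in> carrier_mat m k \<Longrightarrow> B \<in> carrier_mat n l \<Longrightarrow> kron_mat A B \<in> carrier_mat (m * n) (k * l)"
  by (simp add: kron_mat_def)

lemma index_kron_mat:
  "A \<in> carrier_mat m k \<Longrightarrow> B \<in> carrier_mat n l \<Longrightarrow> r < m * n \<Longrightarrow> c < k * l \<Longrightarrow>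
   kron_mat A B $$ (r, c) = A $$ (r div n, c div l) * B $$ (r mod n, c mod l)"
  by (simp add: kron_mat_def)

lemma kron_mat_mult:
  assumes A: "A \<in> carrier_mat m k" and B: "B \<in> carrier_mat n l"
    and C: "C \<in> carrier_mat k p" and D: "D \<in> carrier_mat l q"
  shows "kron_mat A B * kron_mat C D = kron_mat (A * C) (B * D)"
proof (rule eq_matI)
  fix r c assume "r < dim_row (kron_mat (A * C) (B * D))" "c < dim_col (kron_mat (A * C) (B * D))"
  then have r: "r < m * n" and c: "c < p * q" using assms by (auto simp: kron_mat_def)
  have "(kron_mat A B * kron_mat C D) $$ (r, c) =
      (\<Sum>x<k * l. kron_mat A B $$ (r, x) * kron_mat C D $$ (x, c))"
    by (rule index_mult_mat_sum[OF kron_mat_carrier[OF A B] kron_mat_carrier[OF C D] r c])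
  also have "\<dots> = (\<Sum>x<k * l. (A $$ (r div n, x div l) * C $$ (x div l, c div q)) *
      (B $$ (r mod n, x mod l) * D $$ (x mod l, c mod q)))"
    using r c A B C D by (intro sum.cong) (auto simp: index_kron_mat ac_simps)
  also have "\<dots> = (\<Sum>a<k. A $$ (r div n, a) * C $$ (a, c div q)) *
      (\<Sum>b<l. B $$ (r mod n, b) * D $$ (b, c mod q))"
    unfolding sum_product by (rule sum_lessThan_mult_div_mod)
  also have "\<dots> = kron_mat (A * C) (B * D) $$ (r, c)"
    using r c
    by (simp add: index_kron_mat[OF mult_carrier_mat[OF A C] mult_carrier_mat[OF B D]]
        index_mult_mat_sum[OF A C] index_mult_mat_sum[OF B D]
        less_mult_imp_div_less mod_less_of_less_mult)
  finally show "(kron_mat A B * kron_mat C D) $$ (r, c) = kron_mat (A * C) (B * D) $$ (r, c)" .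
qed (use assms in \<open>auto simp: kron_mat_def\<close>)

lemma kron_mat_one: "kron_mat (1\<^sub>m m) (1\<^sub>m n) = 1\<^sub>m (m * n)"
proof (rule eq_matI)
  fix r c assume "r < dim_row (1\<^sub>m (m * n) :: complex mat)" "c < dim_col (1\<^sub>m (m * n) :: complex mat)"
  then have r: "r < m * n" and c: "c < m * n" by auto
  have "r = c \<longleftrightarrow> r div n = c div n \<and> r mod n = c mod n"
    by (metis div_mult_mod_eq)
  then show "kron_mat (1\<^sub>m m) (1\<^sub>m n) $$ (r, c) = 1\<^sub>m (m * n) $$ (r, c)"
    using r c
    by (simp add: index_kron_mat[OF one_carrier_mat one_carrier_mat]
        less_mult_imp_div_less mod_less_of_less_mult)
qed (auto simp: kron_mat_def)

lemma msum_carrier [simp]: "msum n f I \<in> carrier_mat n n"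
  by (simp add: msum_def)

lemma dim_msum [simp]: "dim_row (msum n f I) = n" "dim_col (msum n f I) = n"
  by (simp_all add: msum_def)

lemma index_msum:
  "i < n \<Longrightarrow> j < n \<Longrightarrow> msum n f I $$ (i, j) = (\<Sum>k\<in>I. f k $$ (i, j))"
  by (simp add: msum_def)

lemma msum_cong: "(\<And>i. i \<in> I \<Longrightarrow> f i = g i) \<Longrightarrow> msum n f I = msum n g I"
  unfolding msum_def by (auto intro!: sum.cong)

lemma msum_swap:
  "msum n (\<lambda>i. msum n (\<lambda>j. g i j) J) I = msum n (\<lambda>j. msum n (\<lambda>i. g i j) I) J"
  by (rule eq_matI) (auto simp: index_msum sum.swap[of _ I])

lemma msum_lessThan_eq_atLeastAtMost:
  "msum m f {..<n} = msum m (\<lambda>i. f (i - 1)) {1..n}"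
  unfolding msum_def
  by (intro arg_cong[of _ _ "mat m m"] ext)
     (auto intro!: sum.reindex_bij_witness[of _ "\<lambda>i. i - 1" Suc])

lemma msum_eq_single:
  assumes "finite I" "k \<in> I" "\<And>j. j \<in> I - {k} \<Longrightarrow> f j = 0\<^sub>m n n" "f k \<in> carrier_mat n n"
  shows "msum n f I = f k"
proof (rule eq_matI)
  fix r c assume "r < dim_row (f k)" "c < dim_col (f k)"
  then have r: "r < n" and c: "c < n" using assms by auto
  have "(\<Sum>i\<in>I. f i $$ (r, c)) = f k $$ (r, c) + (\<Sum>i\<in>I - {k}. f i $$ (r, c))"
    using assms by (simp add: sum.remove)
  also have "(\<Sum>i\<in>I - {k}. f i $$ (r, c)) = 0"
    using assms r c by (intro sum.neutral) auto
  finally show "msum n f I $$ (r, c) = f k $$ (r, c)" using r c by (simp add: index_msum)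
qed (use assms in auto)

lemma mult_msum:
  assumes A: "A \<in> carrier_mat n n" and f: "\<And>i. i \<in> I \<Longrightarrow> f i \<in> carrier_mat n n"
  shows "A * msum n f I = msum n (\<lambda>i. A * f i) I"
proof (rule eq_matI)
  fix r c assume "r < dim_row (msum n (\<lambda>i. A * f i) I)" "c < dim_col (msum n (\<lambda>i. A * f i) I)"
  then have r: "r < n" and c: "c < n" by auto
  have "(A * msum n f I) $$ (r, c) = (\<Sum>x<n. A $$ (r, x) * (\<Sum>i\<in>I. f i $$ (x, c)))"
    by (subst index_mult_mat_sum[OF A msum_carrier]) (use r c in \<open>simp_all add: index_msum\<close>)
  also have "\<dots> = (\<Sum>i\<in>I. \<Sum>x<n. A $$ (r, x) * f i $$ (x, c))"
    by (simp add: sum_distrib_left sum.swap[of _ I])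
  also have "\<dots> = msum n (\<lambda>i. A * f i) I $$ (r, c)"
    using r c by (simp add: index_msum index_mult_mat_sum[OF A f])
  finally show "(A * msum n f I) $$ (r, c) = msum n (\<lambda>i. A * f i) I $$ (r, c)" .
qed (use A in auto)

lemma msum_mult:
  assumes A: "A \<in> carrier_mat n n" and f: "\<And>i. i \<in> I \<Longrightarrow> f i \<in> carrier_mat n n"
  shows "msum n f I * A = msum n (\<lambda>i. f i * A) I"
proof (rule eq_matI)
  fix r c assume "r < dim_row (msum n (\<lambda>i. f i * A) I)" "c < dim_col (msum n (\<lambda>i. f i * A) I)"
  then have r: "r < n" and c: "c < n" by auto
  have "(msum n f I * A) $$ (r, c) = (\<Sum>x<n. (\<Sum>i\<in>I. f i $$ (r, x)) * A $$ (x, c))"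
    by (subst index_mult_mat_sum[OF msum_carrier A]) (use r c in \<open>simp_all add: index_msum\<close>)
  also have "\<dots> = (\<Sum>i\<in>I. \<Sum>x<n. f i $$ (r, x) * A $$ (x, c))"
    by (simp add: sum_distrib_right sum.swap[of _ I])
  also have "\<dots> = msum n (\<lambda>i. f i * A) I $$ (r, c)"
    using r c by (simp add: index_msum index_mult_mat_sum[OF f A])
  finally show "(msum n f I * A) $$ (r, c) = msum n (\<lambda>i. f i * A) I $$ (r, c)" .
qed (use A in auto)

lemma kron_mat_msum_right:
  assumes A: "A \<in> carrier_mat m m" and f: "\<And>i. i \<in> I \<Longrightarrow> f i \<in> carrier_mat n n"
  shows "kron_mat A (msum n f I) = msum (m * n) (\<lambda>i. kron_mat A (f i)) I"
proof (rule eq_matI)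
  fix r c assume "r < dim_row (msum (m * n) (\<lambda>i. kron_mat A (f i)) I)"
    "c < dim_col (msum (m * n) (\<lambda>i. kron_mat A (f i)) I)"
  then have r: "r < m * n" and c: "c < m * n" by auto
  have "kron_mat A (msum n f I) $$ (r, c) =
      (\<Sum>i\<in>I. A $$ (r div n, c div n) * f i $$ (r mod n, c mod n))"
    using r c by (simp add: index_kron_mat[OF A msum_carrier] index_msum mod_less_of_less_mult
        sum_distrib_left)
  also have "\<dots> = msum (m * n) (\<lambda>i. kron_mat A (f i)) I $$ (r, c)"
    using r c by (simp add: index_msum index_kron_mat[OF A f])
  finally show "kron_mat A (msum n f I) $$ (r, c) = msum (m * n) (\<lambda>i. kron_mat A (f i)) I $$ (r, c)" .
qed (use A in \<open>auto simp: kron_mat_def\<close>)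

definition quad_form :: "nat \<Rightarrow> complex mat \<Rightarrow> (nat \<Rightarrow> complex) \<Rightarrow> complex" where
  "quad_form n A v = (\<Sum>i<n. \<Sum>j<n. cnj (v i) * A $$ (i, j) * v j)"

lemma psd_mat_iff_quad_form:
  "psd_mat n A \<longleftrightarrow> A \<in> carrier_mat n n \<and> hermitian_mat A \<and> (\<forall>v. 0 \<le> quad_form n A v)"
  by (simp add: psd_mat_def quad_form_def)

lemma hermitian_matD:
  "hermitian_mat A \<Longrightarrow> A \<in> carrier_mat n n \<Longrightarrow> i < n \<Longrightarrow> j < n \<Longrightarrow> cnj (A $$ (i, j)) = A $$ (j, i)"
  unfolding hermitian_mat_def by (metis carrier_matD(1) complex_cnj_cnj)

lemma index_mult_mult_mat_sum:
  assumes A: "A \<in> carrier_mat n n" and B: "B \<in> carrier_mat n n" and C: "C \<in> carrier_mat n n"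
    and "i < n" "j < n"
  shows "(A * B * C) $$ (i, j) = (\<Sum>k<n. \<Sum>l<n. A $$ (i, k) * B $$ (k, l) * C $$ (l, j))"
proof -
  have "(A * B * C) $$ (i, j) = (\<Sum>l<n. (\<Sum>k<n. A $$ (i, k) * B $$ (k, l)) * C $$ (l, j))"
    using \<open>i < n\<close> \<open>j < n\<close>
    by (subst index_mult_mat_sum[OF mult_carrier_mat[OF A B] C])
      (auto intro!: sum.cong simp del: index_mult_mat simp add: index_mult_mat_sum[OF A B])
  also have "\<dots> = (\<Sum>k<n. \<Sum>l<n. A $$ (i, k) * B $$ (k, l) * C $$ (l, j))"
    unfolding sum_distrib_right by (rule sum.swap)
  finally show ?thesis .
qed

lemma hermitian_mat_compress:
  assumes P: "hermitian_mat P" "P \<in> carrier_mat n n" and T: "hermitian_mat T" "T \<in> carrier_mat n n"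
  shows "hermitian_mat (P * T * P)"
  unfolding hermitian_mat_def
proof (intro conjI allI impI)
  show "dim_row (P * T * P) = dim_col (P * T * P)" using P by auto
  fix i j assume "i < dim_row (P * T * P)" "j < dim_col (P * T * P)"
  then have i: "i < n" and j: "j < n" using P by auto
  have "cnj ((P * T * P) $$ (j, i)) = (\<Sum>k<n. \<Sum>l<n. P $$ (k, j) * T $$ (l, k) * P $$ (i, l))"
    unfolding index_mult_mult_mat_sum[OF P(2) T(2) P(2) j i]
    using i j by (simp add: hermitian_matD[OF P] hermitian_matD[OF T])
  also have "\<dots> = (\<Sum>l<n. \<Sum>k<n. P $$ (i, l) * T $$ (l, k) * P $$ (k, j))"
    by (subst sum.swap) (simp add: ac_simps)
  also have "\<dots> = (P * T * P) $$ (i, j)"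
    by (simp only: index_mult_mult_mat_sum[OF P(2) T(2) P(2) i j])
  finally show "(P * T * P) $$ (i, j) = cnj ((P * T * P) $$ (j, i))" by simp
qed

lemma quad_form_compress:
  assumes P: "hermitian_mat P" "P \<in> carrier_mat n n" and T: "T \<in> carrier_mat n n"
  shows "quad_form n (P * T * P) v = quad_form n T (\<lambda>k. \<Sum>j<n. P $$ (k, j) * v j)"
proof -
  have "quad_form n (P * T * P) v =
      (\<Sum>i<n. \<Sum>j<n. \<Sum>k<n. \<Sum>l<n. cnj (v i) * P $$ (i, k) * T $$ (k, l) * P $$ (l, j) * v j)"
    unfolding quad_form_def
    by (intro sum.cong refl)
      (simp add: index_mult_mult_mat_sum[OF P(2) T P(2)] sum_distrib_left sum_distrib_right mult.assoc)
  also have "\<dots> =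
      (\<Sum>k<n. \<Sum>l<n. \<Sum>i<n. \<Sum>j<n. cnj (v i) * P $$ (i, k) * T $$ (k, l) * P $$ (l, j) * v j)"
    by (rule sum_lessThan_swap_pairs)
  also have "\<dots> = quad_form n T (\<lambda>k. \<Sum>j<n. P $$ (k, j) * v j)"
    unfolding quad_form_def
  proof (intro sum.cong refl)
    fix k l assume "k \<in> {..<n}" "l \<in> {..<n}"
    then have "cnj (\<Sum>j<n. P $$ (k, j) * v j) = (\<Sum>i<n. cnj (v i) * P $$ (i, k))"
      using P by (simp add: hermitian_matD mult.commute)
    then show "(\<Sum>i<n. \<Sum>j<n. cnj (v i) * P $$ (i, k) * T $$ (k, l) * P $$ (l, j) * v j) =
        cnj (\<Sum>j<n. P $$ (k, j) * v j) * T $$ (k, l) * (\<Sum>j<n. P $$ (l, j) * v j)"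
      unfolding \<open>cnj _ = _\<close> sum_distrib_right sum_distrib_left
      by (subst sum.swap) (simp only: mult.assoc)
  qed
  finally show ?thesis .
qed

lemma psd_mat_compress:
  assumes "hermitian_mat P" "P \<in> carrier_mat n n" and "psd_mat n T"
  shows "psd_mat n (P * T * P)"
  using assms
  by (auto simp: psd_mat_iff_quad_form hermitian_mat_compress quad_form_compress
      intro!: mult_carrier_mat)

lemma psd_mat_msum:
  assumes "\<And>j. j \<in> J \<Longrightarrow> psd_mat n (f j)"
  shows "psd_mat n (msum n f J)"
proof -
  have f: "hermitian_mat (f j)" "f j \<in> carrier_mat n n" if "j \<in> J" for j
    using assms that by (simp_all add: psd_mat_def)
  have "hermitian_mat (msum n f J)"
    unfolding hermitian_mat_def using f by (simp add: index_msum hermitian_matD[of _ n])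
  moreover have "quad_form n (msum n f J) v = (\<Sum>t\<in>J. quad_form n (f t) v)" for v
  proof -
    have "quad_form n (msum n f J) v = (\<Sum>i<n. \<Sum>j<n. \<Sum>t\<in>J. cnj (v i) * f t $$ (i, j) * v j)"
      unfolding quad_form_def
      by (intro sum.cong refl) (simp add: index_msum sum_distrib_left sum_distrib_right)
    then show ?thesis
      unfolding quad_form_def by (simp only: sum.swap[of _ "{..<n}" J])
  qed
  ultimately show ?thesis
    using assms by (simp add: psd_mat_iff_quad_form sum_nonneg)
qed

lemma msum_pinching_eq:
  assumes S: "S \<in> carrier_mat n n"
    and K: "\<And>j. j \<in> J \<Longrightarrow> K j \<in> carrier_mat n n"
    and idem: "\<And>j. j \<in> J \<Longrightarrow> K j * K j = K j"
    and comm: "\<And>j. j \<in> J \<Longrightarrow> K j * S = S * K j"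
    and resolution: "msum n K J = 1\<^sub>m n"
  shows "msum n (\<lambda>j. K j * S * K j) J = S"
proof -
  have "msum n (\<lambda>j. K j * S * K j) J = msum n (\<lambda>j. S * K j) J"
  proof (rule msum_cong)
    fix j assume j: "j \<in> J"
    have "K j * S * K j = S * (K j * K j)"
      using S K[OF j] by (simp add: comm[OF j] assoc_mult_mat[of S n n])
    then show "K j * S * K j = S * K j" by (simp add: idem[OF j])
  qed
  also have "\<dots> = S * msum n K J" using S K by (simp add: mult_msum)
  finally show ?thesis using S by (simp add: resolution)
qed

lemma kron_one_mat_compress:
  assumes R: "R \<in> carrier_mat m m" and T: "T \<in> carrier_mat n n" and P: "P \<in> carrier_mat n n"
  shows "kron_mat (1\<^sub>m m) P * kron_mat R T * kron_mat (1\<^sub>m m) P = kron_mat R (P * T * P)"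
proof -
  have "kron_mat (1\<^sub>m m) P * kron_mat R T = kron_mat R (P * T)"
    using R by (simp add: kron_mat_mult[OF one_carrier_mat P R T])
  then show ?thesis
    using R by (simp add: kron_mat_mult[OF R mult_carrier_mat[OF P T] one_carrier_mat P])
qed

lemma right_commutant_pinching_eq:
  assumes \<Sigma>: "\<Sigma> \<in> carrier_mat (M * N) (M * N)"
    and P: "\<And>j. j \<in> J \<Longrightarrow> proj_mat N (P j)"
    and comm: "\<And>j. j \<in> J \<Longrightarrow> P j \<in> right_commutant M N \<Sigma>"
    and resolution: "msum N P J = 1\<^sub>m N"
  shows "msum (M * N) (\<lambda>j. kron_mat (1\<^sub>m M) (P j) * \<Sigma> * kron_mat (1\<^sub>m M) (P j)) J = \<Sigma>"
proof (rule msum_pinching_eq[OF \<Sigma>])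
  have PC: "P j \<in> carrier_mat N N" if "j \<in> J" for j
    using P[OF that] by (simp add: proj_mat_def)
  show "kron_mat (1\<^sub>m M) (P j) \<in> carrier_mat (M * N) (M * N)" if "j \<in> J" for j
    using kron_mat_carrier[OF one_carrier_mat PC[OF that]] by simp
  show "kron_mat (1\<^sub>m M) (P j) * kron_mat (1\<^sub>m M) (P j) = kron_mat (1\<^sub>m M) (P j)" if "j \<in> J" for j
    using P[OF that]
    by (simp add: kron_mat_mult[OF one_carrier_mat PC[OF that] one_carrier_mat PC[OF that]] proj_mat_def)
  show "kron_mat (1\<^sub>m M) (P j) * \<Sigma> = \<Sigma> * kron_mat (1\<^sub>m M) (P j)" if "j \<in> J" for j
    using comm[OF that] by (simp add: right_commutant_def)
  have "msum (M * N) (\<lambda>j. kron_mat (1\<^sub>m M) (P j)) J = kron_mat (1\<^sub>m M) (msum N P J)"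
    by (rule kron_mat_msum_right[OF one_carrier_mat PC, symmetric])
  then show "msum (M * N) (\<lambda>j. kron_mat (1\<^sub>m M) (P j)) J = 1\<^sub>m (M * N)"
    by (simp add: resolution kron_mat_one)
qed

lemma pinching_msum_kron:
  assumes R: "\<And>i. i \<in> I \<Longrightarrow> R i \<in> carrier_mat M M"
    and T: "\<And>i. i \<in> I \<Longrightarrow> T i \<in> carrier_mat N N"
    and P: "\<And>j. j \<in> J \<Longrightarrow> P j \<in> carrier_mat N N"
  shows "msum (M * N) (\<lambda>j. kron_mat (1\<^sub>m M) (P j) * msum (M * N) (\<lambda>i. kron_mat (R i) (T i)) I *
      kron_mat (1\<^sub>m M) (P j)) J =
    msum (M * N) (\<lambda>i. kron_mat (R i) (msum N (\<lambda>j. P j * T i * P j) J)) I"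
proof -
  have RT: "kron_mat (R i) (T i) \<in> carrier_mat (M * N) (M * N)" if "i \<in> I" for i
    using kron_mat_carrier[OF R[OF that] T[OF that]] .
  have "kron_mat (1\<^sub>m M) (P j) * msum (M * N) (\<lambda>i. kron_mat (R i) (T i)) I * kron_mat (1\<^sub>m M) (P j) =
      msum (M * N) (\<lambda>i. kron_mat (R i) (P j * T i * P j)) I" if j: "j \<in> J" for j
  proof -
    have K: "kron_mat (1\<^sub>m M) (P j) \<in> carrier_mat (M * N) (M * N)"
      using kron_mat_carrier[OF one_carrier_mat P[OF j]] by simp
    have KRT: "kron_mat (1\<^sub>m M) (P j) * kron_mat (R i) (T i) \<in> carrier_mat (M * N) (M * N)"
      if "i \<in> I" for i
      using K RT[OF that] by auto
    have "kron_mat (1\<^sub>m M) (P j) * msum (M * N) (\<lambda>i. kron_mat (R i) (T i)) I * kron_mat (1\<^sub>m M) (P j) =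
        msum (M * N) (\<lambda>i. kron_mat (1\<^sub>m M) (P j) * kron_mat (R i) (T i) * kron_mat (1\<^sub>m M) (P j)) I"
      using RT KRT by (simp add: mult_msum[OF K] msum_mult[OF K])
    also have "\<dots> = msum (M * N) (\<lambda>i. kron_mat (R i) (P j * T i * P j)) I"
      using R T P[OF j] by (intro msum_cong kron_one_mat_compress) auto
    finally show ?thesis .
  qed
  then have "msum (M * N) (\<lambda>j. kron_mat (1\<^sub>m M) (P j) * msum (M * N) (\<lambda>i. kron_mat (R i) (T i)) I *
      kron_mat (1\<^sub>m M) (P j)) J =
    msum (M * N) (\<lambda>j. msum (M * N) (\<lambda>i. kron_mat (R i) (P j * T i * P j)) I) J"
    by (rule msum_cong)
  also have "\<dots> = msum (M * N) (\<lambda>i. msum (M * N) (\<lambda>j. kron_mat (R i) (P j * T i * P j)) J) I"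
    by (rule msum_swap)
  also have "\<dots> = msum (M * N) (\<lambda>i. kron_mat (R i) (msum N (\<lambda>j. P j * T i * P j) J)) I"
    using R T P by (intro msum_cong kron_mat_msum_right[symmetric]) (auto intro!: mult_carrier_mat)
  finally show ?thesis .
qed

lemma msum_compress_commute:
  assumes P: "\<And>j. j \<in> J \<Longrightarrow> P j \<in> carrier_mat n n"
    and idem: "\<And>j. j \<in> J \<Longrightarrow> P j * P j = P j"
    and orth: "\<And>j k. j \<in> J \<Longrightarrow> k \<in> J \<Longrightarrow> j \<noteq> k \<Longrightarrow> P j * P k = 0\<^sub>m n n"
    and J: "finite J" and k: "k \<in> J" and T: "T \<in> carrier_mat n n"
  shows "msum n (\<lambda>j. P j * T * P j) J * P k = P k * msum n (\<lambda>j. P j * T * P j) J"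
proof -
  have Pk: "P k \<in> carrier_mat n n" using P k .
  have PT: "P j * T \<in> carrier_mat n n" "T * P j \<in> carrier_mat n n" if "j \<in> J" for j
    using P[OF that] T by auto
  have PTP: "P j * T * P j \<in> carrier_mat n n" if "j \<in> J" for j
    using PT[OF that] P[OF that] by auto
  have "msum n (\<lambda>j. P j * T * P j) J * P k = msum n (\<lambda>j. P j * T * P j * P k) J"
    using PTP by (rule msum_mult[OF Pk])
  also have "\<dots> = msum n (\<lambda>j. (P j * T) * (P j * P k)) J"
    using P T Pk by (intro msum_cong assoc_mult_mat) auto
  also have "\<dots> = (P k * T) * (P k * P k)"
  proof (rule msum_eq_single[OF J k])
    show "(P j * T) * (P j * P k) = 0\<^sub>m n n" if "j \<in> J - {k}" for j
      using that orth[OF _ k] right_mult_zero_mat[OF PT(1)] by auto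
  qed (use PT[OF k] Pk in auto)
  also have "\<dots> = (P k * P k) * (T * P k)"
    using Pk T by (simp add: idem[OF k])
  also have "\<dots> = msum n (\<lambda>j. (P k * P j) * (T * P j)) J"
  proof (rule msum_eq_single[OF J k, symmetric])
    show "(P k * P j) * (T * P j) = 0\<^sub>m n n" if "j \<in> J - {k}" for j
      using that orth[OF k] left_mult_zero_mat[OF PT(2)] by auto
  qed (use PT[OF k] Pk in auto)
  also have "\<dots> = msum n (\<lambda>j. P k * (P j * T * P j)) J"
    using P T Pk by (intro msum_cong) (simp add: assoc_mult_mat[of _ n n _ n _ n])
  also have "\<dots> = P k * msum n (\<lambda>j. P j * T * P j) J"
    using PTP by (rule mult_msum[OF Pk, symmetric])
  finally show ?thesis .
qed

theorem lemma1:
  fixes M N u :: nat and \<Sigma> :: "complex mat" and P :: "nat \<Rightarrow> complex mat"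
  assumes "psd_mat (M * N) \<Sigma>"
    and "separable M N \<Sigma>"
    and "\<forall>j \<in> {1..u}. minimal_proj_in N (right_commutant M N \<Sigma>) (P j)"
    and "\<forall>j \<in> {1..u}. \<forall>k \<in> {1..u}. j \<noteq> k \<longrightarrow> P j * P k = 0\<^sub>m N N"
    and "msum N P {1..u} = 1\<^sub>m N"
  shows "\<exists>s :: nat. \<exists>R T :: nat \<Rightarrow> complex mat.
     (\<forall>i \<in> {1..s}. psd_mat M (R i) \<and> psd_mat N (T i)) \<and>
     \<Sigma> = msum (M * N) (\<lambda>i. kron_mat (R i) (T i)) {1..s} \<and>
     (\<forall>i \<in> {1..s}. \<forall>j \<in> {1..u}. T i * P j = P j * T i)"
proof -
  obtain n R T where RT: "\<And>i. i < n \<Longrightarrow> psd_mat M (R i) \<and> psd_mat N (T i)"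
    and decomp: "\<Sigma> = msum (M * N) (\<lambda>i. kron_mat (R i) (T i)) {..<n}"
    using assms(2) unfolding separable_def by blast
  have P: "proj_mat N (P j)" "P j \<in> right_commutant M N \<Sigma>" if "j \<in> {1..u}" for j
    using assms(3) that by (simp_all add: minimal_proj_in_def)
  then have PC: "P j \<in> carrier_mat N N" "P j * P j = P j" "hermitian_mat (P j)" if "j \<in> {1..u}" for j
    using that by (simp_all add: proj_mat_def)
  define T' where "T' i = msum N (\<lambda>j. P j * T i * P j) {1..u}" for i
  have "\<Sigma> = msum (M * N) (\<lambda>j. kron_mat (1\<^sub>m M) (P j) * \<Sigma> * kron_mat (1\<^sub>m M) (P j)) {1..u}"
    using right_commutant_pinching_eq[OF _ P assms(5)] assms(1) by (simp add: psd_mat_def)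
  also have "\<dots> = msum (M * N) (\<lambda>i. kron_mat (R i) (T' i)) {..<n}"
    unfolding T'_def decomp using RT PC by (intro pinching_msum_kron) (auto simp: psd_mat_def)
  finally have "\<Sigma> = msum (M * N) (\<lambda>i. kron_mat (R (i - 1)) (T' (i - 1))) {1..n}"
    by (simp add: msum_lessThan_eq_atLeastAtMost)
  moreover have "psd_mat N (T' i)" if "i < n" for i
    unfolding T'_def using RT[OF that] PC by (intro psd_mat_msum psd_mat_compress) auto
  moreover have "T' i * P j = P j * T' i" if "i < n" "j \<in> {1..u}" for i j
    unfolding T'_def using RT[OF \<open>i < n\<close>] PC assms(4) \<open>j \<in> {1..u}\<close>
    by (intro msum_compress_commute) (auto simp: psd_mat_def)
  ultimately show ?thesis
    using RT by (intro exI[of _ n] exI[of _ "\<lambda>i. R (i - 1)"] exI[of _ "\<lambda>i. T' (i - 1)"]) auto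
qed

end
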